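(* Let $\mathcal{D}\subseteq\mathbb{R}^m$ be a polyhedron and $c,d\in\mathbb{R}^m$, and consider the problem $\inf\ c^\top x/d^\top x$ subject to $d^\top x>0$, $x\in\mathcal{D}$. If $\mathcal{D}\cap\{x: d^\top x>0\}\ne\emptyset$, then the optimal value of this problem is $-\infty$ if and only if at least one of the following holds: (1) there exists $x\in\mathcal{D}$ with $c^\top x<0$ and $d^\top x=0$; (2) there exists $r\in\mathbb{R}^m$ with $c^\top r<0$, $d^\top r=0$, and $x+\lambda r\in\mathcal{D}$ for all $x\in\mathcal{D}$ and all $\lambda\ge0$. *)

theory Defs
  imports "HOL-Analysis.Analysis" "HOL-Library.Extended_Real"
begin

end

theory Submission
  imports Defs
begin

text \<open>If (1) or (2) holds, move from a point \<open>y \<in> D\<close> with \<open>d \<bullet> y > 0\<close> towards the point of (1)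
  or along the ray of (2): up to rescaling, the ratio becomes \<open>(c \<bullet> y + s k) / (d \<bullet> y)\<close> with
  \<open>k < 0\<close> and \<open>s \<ge> 0\<close> arbitrary. Conversely, if neither holds, Farkas' lemma shows that
  \<open>-c \<bullet> x \<le> \<mu> (d \<bullet> x)\<close> is a nonnegative combination of the inequalities describing \<open>D\<close>, of
  \<open>\<plusminus>d \<bullet> x \<le> 0\<close> and of \<open>0 \<le> 1\<close>, so the ratio is bounded below by \<open>-\<mu>\<close>.\<close>

lemma INF_ereal_eq_minf_iff:
  "(INF x\<in>A. ereal (f x)) = -\<infinity> \<longleftrightarrow> (\<forall>B. \<exists>x\<in>A. f x < B)"
proof
  assume "(INF x\<in>A. ereal (f x)) = -\<infinity>"
  then have "(INF x\<in>A. ereal (f x)) < ereal B" for B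
    by simp
  then show "\<forall>B. \<exists>x\<in>A. f x < B"
    by (simp add: INF_less_iff)
next
  assume unbounded: "\<forall>B. \<exists>x\<in>A. f x < B"
  show "(INF x\<in>A. ereal (f x)) = -\<infinity>"
  proof (rule ccontr)
    assume "(INF x\<in>A. ereal (f x)) \<noteq> -\<infinity>"
    then obtain b where "b > -\<infinity>" and "\<forall>x\<in>A. b \<le> ereal (f x)"
      unfolding INF_eq_minf by blast
    moreover obtain x where "x \<in> A" "f x < real_of_ereal b"
      using unbounded by blast
    ultimately show False
      by (cases b) auto
  qed
qed

lemma ex_nonneg_ratio_less:
  fixes p q k B :: real
  assumes "q > 0" "k < 0"
  shows "\<exists>s\<ge>0. (p + s * k) / q < B"
proof -
  define s where "s = \<bar>B * q - p\<bar> / (- k) + 1"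
  have "s \<ge> 0"
    using assms by (simp add: s_def)
  moreover have "s * k = - \<bar>B * q - p\<bar> + k"
    using assms by (simp add: s_def field_simps)
  then have "(p + s * k) / q < B"
    using assms by (simp add: divide_less_eq)
  ultimately show ?thesis
    by blast
qed

lemma ratio_unbounded_below_if_point:
  fixes c d :: "'a::real_inner"
  assumes "convex D" "y \<in> D" "d \<bullet> y > 0"
    and "x \<in> D" "c \<bullet> x < 0" "d \<bullet> x = 0"
  shows "\<exists>z\<in>D. d \<bullet> z > 0 \<and> (c \<bullet> z) / (d \<bullet> z) < B"
proof -
  obtain s where "s \<ge> 0" and s: "(c \<bullet> y + s * (c \<bullet> x)) / (d \<bullet> y) < B"
    using ex_nonneg_ratio_less[OF assms(3,5)] by blast
  define z where "z = (1 / (1 + s)) *\<^sub>R y + (s / (1 + s)) *\<^sub>R x"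
  have "z \<in> D"
    unfolding z_def using assms \<open>s \<ge> 0\<close>
    by (intro convexD) (auto simp: field_simps)
  moreover have "d \<bullet> z = (d \<bullet> y) / (1 + s)"
    using \<open>d \<bullet> x = 0\<close> by (simp add: z_def inner_add_right)
  moreover have "c \<bullet> z = (c \<bullet> y + s * (c \<bullet> x)) / (1 + s)"
    using \<open>s \<ge> 0\<close> by (simp add: z_def inner_add_right add_divide_distrib)
  ultimately show ?thesis
    using s \<open>s \<ge> 0\<close> \<open>d \<bullet> y > 0\<close> by (intro bexI[of _ z]) auto
qed

lemma ratio_unbounded_below_if_direction:
  fixes c d :: "'a::real_inner"
  assumes "y \<in> D" "d \<bullet> y > 0"
    and "c \<bullet> r < 0" "d \<bullet> r = 0" "\<forall>x\<in>D. \<forall>t::real. t \<ge> 0 \<longrightarrow> x + t *\<^sub>R r \<in> D"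
  shows "\<exists>z\<in>D. d \<bullet> z > 0 \<and> (c \<bullet> z) / (d \<bullet> z) < B"
proof -
  obtain s where "s \<ge> 0" and s: "(c \<bullet> y + s * (c \<bullet> r)) / (d \<bullet> y) < B"
    using ex_nonneg_ratio_less[OF assms(2,3)] by blast
  then have "y + s *\<^sub>R r \<in> D"
    using assms by blast
  then show ?thesis
    using s assms by (intro bexI[of _ "y + s *\<^sub>R r"]) (auto simp: inner_add_right)
qed

lemma farkas_separation:
  fixes S :: "'a::euclidean_space set"
  assumes "finite S" "z \<notin> convex_cone hull S"
  obtains w where "\<And>k. k \<in> S \<Longrightarrow> 0 \<le> w \<bullet> k" "w \<bullet> z < 0"
proof -
  let ?K = "convex_cone hull S"
  obtain w b where wz: "w \<bullet> z < b" and wK: "\<forall>k\<in>?K. b < w \<bullet> k"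
    using separating_hyperplane_closed_point[OF convex_convex_cone_hull
        closed_convex_cone_hull[OF assms(1)] assms(2)] by blast
  have "b < 0"
    using wK convex_cone_hull_contains_0 by force
  have "0 \<le> w \<bullet> k" if "k \<in> ?K" for k
  proof (rule ccontr)
    assume neg: "\<not> 0 \<le> w \<bullet> k"
    \<comment> \<open>scaling \<open>k\<close> inside the cone would reach the level \<open>b\<close> of the separating hyperplane\<close>
    define t where "t = b / (w \<bullet> k)"
    have "t *\<^sub>R k \<in> ?K"
      using neg \<open>b < 0\<close> that
      by (intro conicD[OF conic_convex_cone_hull]) (auto simp: t_def divide_nonpos_neg)
    moreover have "w \<bullet> (t *\<^sub>R k) = b"
      using neg by (simp add: t_def)
    ultimately show False
      using wK by force
  qed
  then show thesis
    using that hull_subset[of S convex_cone] wz \<open>b < 0\<close> by force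
qed

definition valid_ineqs_modulo :: "'a::real_inner set \<Rightarrow> 'a \<Rightarrow> ('a \<times> real) set" where
  "valid_ineqs_modulo D d = {(a, \<beta>). \<exists>\<mu>. \<forall>x\<in>D. a \<bullet> x \<le> \<beta> + \<mu> * (d \<bullet> x)}"

lemma convex_cone_valid_ineqs_modulo: "convex_cone (valid_ineqs_modulo D d)"
  unfolding convex_cone_def
proof (intro conjI)
  show "valid_ineqs_modulo D d \<noteq> {}"
    by (auto simp: valid_ineqs_modulo_def intro!: exI[of _ "(0, 0)"] exI[of _ 0])
  show "conic (valid_ineqs_modulo D d)"
    unfolding conic_def
  proof (intro allI impI)
    fix p and t :: real
    assume "p \<in> valid_ineqs_modulo D d" "0 \<le> t"
    then obtain \<mu> where "\<forall>x\<in>D. fst p \<bullet> x \<le> snd p + \<mu> * (d \<bullet> x)"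
      by (auto simp: valid_ineqs_modulo_def)
    then have "\<forall>x\<in>D. t * (fst p \<bullet> x) \<le> t * snd p + (t * \<mu>) * (d \<bullet> x)"
      using \<open>0 \<le> t\<close> by (metis distrib_left mult.assoc mult_left_mono)
    then show "t *\<^sub>R p \<in> valid_ineqs_modulo D d"
      by (cases p) (auto simp: valid_ineqs_modulo_def)
  qed
  show "convex (valid_ineqs_modulo D d)"
    unfolding convex_def
  proof (intro ballI allI impI)
    fix p q and u v :: real
    assume "p \<in> valid_ineqs_modulo D d" "q \<in> valid_ineqs_modulo D d" "0 \<le> u" "0 \<le> v"
    then obtain \<mu> \<nu> where "\<forall>x\<in>D. fst p \<bullet> x \<le> snd p + \<mu> * (d \<bullet> x)"
      and "\<forall>x\<in>D. fst q \<bullet> x \<le> snd q + \<nu> * (d \<bullet> x)"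
      by (auto simp: valid_ineqs_modulo_def)
    then have "\<forall>x\<in>D. u * (fst p \<bullet> x) + v * (fst q \<bullet> x)
        \<le> u * (snd p + \<mu> * (d \<bullet> x)) + v * (snd q + \<nu> * (d \<bullet> x))"
      using \<open>0 \<le> u\<close> \<open>0 \<le> v\<close> by (blast intro: add_mono mult_left_mono)
    then show "u *\<^sub>R p + v *\<^sub>R q \<in> valid_ineqs_modulo D d"
      by (cases p, cases q) (auto simp: valid_ineqs_modulo_def inner_add_left algebra_simps
          intro!: exI[of _ "u * \<mu> + v * \<nu>"])
  qed
qed

lemma polyhedron_inequality_form:
  fixes D :: "'a::euclidean_space set"
  assumes "polyhedron D"
  obtains F :: "'a set set" and a b where "finite F" "D = {x. \<forall>h\<in>F. a h \<bullet> x \<le> b h}"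
proof -
  obtain F where "finite F" "D = \<Inter>F" and "\<forall>h\<in>F. \<exists>a b. a \<noteq> 0 \<and> h = {x. a \<bullet> x \<le> b}"
    using assms unfolding polyhedron_def by blast
  moreover from this obtain a b where "\<And>h. h \<in> F \<Longrightarrow> h = {x. a h \<bullet> x \<le> b h}"
    by metis
  ultimately have "x \<in> D \<longleftrightarrow> (\<forall>h\<in>F. a h \<bullet> x \<le> b h)" for x
    by blast
  with \<open>finite F\<close> show thesis
    using that[of F a b] by blast
qed

text \<open>The Farkas certificate \<open>(r, s)\<close> yields the recession direction \<open>-r\<close> (if \<open>s = 0\<close>) or the
  point \<open>-r /\<^sub>R s\<close> (if \<open>s > 0\<close>) of \<open>D\<close>, along which \<open>c\<close> decreases while \<open>d\<close> stays zero.\<close>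

lemma neg_objective_in_constraint_cone:
  fixes a :: "'i \<Rightarrow> 'a::euclidean_space"
  assumes "finite F" and D: "D = {x. \<forall>i\<in>F. a i \<bullet> x \<le> b i}"
    and point: "\<And>x. x \<in> D \<Longrightarrow> d \<bullet> x = 0 \<Longrightarrow> 0 \<le> c \<bullet> x"
    and direction: "\<And>r. d \<bullet> r = 0 \<Longrightarrow> \<forall>x\<in>D. \<forall>t::real. t \<ge> 0 \<longrightarrow> x + t *\<^sub>R r \<in> D \<Longrightarrow> 0 \<le> c \<bullet> r"
  shows "(-c, 0) \<in> convex_cone hull ((\<lambda>i. (a i, b i)) ` F \<union> {(d, 0), (-d, 0), (0, 1)})"
    (is "_ \<in> convex_cone hull ?S")
proof (rule ccontr)
  assume "(-c, 0) \<notin> convex_cone hull ?S"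
  moreover have "finite ?S"
    using \<open>finite F\<close> by simp
  ultimately obtain w where w: "\<And>k. k \<in> ?S \<Longrightarrow> 0 \<le> w \<bullet> k" "w \<bullet> (-c, 0) < 0"
    using farkas_separation by blast
  obtain r s where "w = (r, s)"
    by (cases w)
  with w have rs: "\<And>k. k \<in> ?S \<Longrightarrow> 0 \<le> (r, s) \<bullet> k" and "(r, s) \<bullet> (-c, 0) < 0"
    by auto
  then have "0 < c \<bullet> r" "d \<bullet> r = 0" "0 \<le> s"
    using rs[of "(d, 0)"] rs[of "(-d, 0)"] rs[of "(0, 1)"] by (auto simp: inner_commute)
  have facet: "0 \<le> a i \<bullet> r + s * b i" if "i \<in> F" for i
    using rs[of "(a i, b i)"] that by (simp add: inner_commute)
  show False
  proof (cases "s = 0")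
    case True
    have "x - t *\<^sub>R r \<in> D" if "x \<in> D" "t \<ge> 0" for x t
    proof -
      have "a i \<bullet> x - t * (a i \<bullet> r) \<le> b i" if "i \<in> F" for i
      proof -
        have "0 \<le> t * (a i \<bullet> r)"
          using facet[OF that] True \<open>t \<ge> 0\<close> by simp
        moreover have "a i \<bullet> x \<le> b i"
          using \<open>x \<in> D\<close> that by (simp add: D)
        ultimately show ?thesis
          by linarith
      qed
      then show ?thesis
        by (simp add: D inner_diff_right)
    qed
    then have "0 \<le> c \<bullet> (-r)"
      using direction[of "-r"] \<open>d \<bullet> r = 0\<close> by simp
    with \<open>0 < c \<bullet> r\<close> show False
      by simp
  next
    case False
    with \<open>0 \<le> s\<close> have "0 < s"
      by simp
    have "a i \<bullet> ((- 1 / s) *\<^sub>R r) \<le> b i" if "i \<in> F" for i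
    proof -
      have "- (a i \<bullet> r) \<le> b i * s"
        using facet[OF that] by (simp add: algebra_simps)
      then show ?thesis
        using \<open>0 < s\<close> by (simp add: field_simps)
    qed
    then have "(- 1 / s) *\<^sub>R r \<in> D"
      by (simp add: D)
    moreover have "c \<bullet> ((- 1 / s) *\<^sub>R r) < 0"
      using \<open>0 < c \<bullet> r\<close> \<open>0 < s\<close> by simp
    ultimately show False
      using point[of "(- 1 / s) *\<^sub>R r"] \<open>d \<bullet> r = 0\<close> by simp
  qed
qed

lemma polyhedron_ratio_bounded_below:
  fixes D :: "'a::euclidean_space set"
  assumes "polyhedron D"
    and point: "\<And>x. x \<in> D \<Longrightarrow> d \<bullet> x = 0 \<Longrightarrow> 0 \<le> c \<bullet> x"
    and direction: "\<And>r. d \<bullet> r = 0 \<Longrightarrow> \<forall>x\<in>D. \<forall>t::real. t \<ge> 0 \<longrightarrow> x + t *\<^sub>R r \<in> D \<Longrightarrow> 0 \<le> c \<bullet> r"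
  obtains m where "\<And>x. x \<in> D \<Longrightarrow> d \<bullet> x > 0 \<Longrightarrow> m \<le> (c \<bullet> x) / (d \<bullet> x)"
proof -
  obtain F :: "'a set set" and a b where "finite F" and D: "D = {x. \<forall>h\<in>F. a h \<bullet> x \<le> b h}"
    using polyhedron_inequality_form[OF assms(1)] by blast
  let ?S = "(\<lambda>h. (a h, b h)) ` F \<union> {(d, 0), (-d, 0), (0, 1)}"
  have "?S \<subseteq> valid_ineqs_modulo D d"
    by (auto simp: valid_ineqs_modulo_def D intro: exI[of _ 0] exI[of _ 1] exI[of _ "-1"])
  then have "convex_cone hull ?S \<subseteq> valid_ineqs_modulo D d"
    by (intro hull_minimal convex_cone_valid_ineqs_modulo)
  moreover have "(-c, 0) \<in> convex_cone hull ?S"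
    using neg_objective_in_constraint_cone[OF \<open>finite F\<close> D point direction] by blast
  ultimately have "(-c, 0) \<in> valid_ineqs_modulo D d"
    by blast
  then obtain \<mu> where \<mu>: "\<And>x. x \<in> D \<Longrightarrow> - (c \<bullet> x) \<le> \<mu> * (d \<bullet> x)"
    by (auto simp: valid_ineqs_modulo_def)
  have "- \<mu> \<le> (c \<bullet> x) / (d \<bullet> x)" if "x \<in> D" "d \<bullet> x > 0" for x
    using \<mu>[OF that(1)] that(2) by (simp add: le_divide_eq)
  then show thesis
    using that by blast
qed

theorem theorem3p7:
  fixes D :: "(real ^ 'm) set" and c d :: "real ^ 'm"
  assumes "polyhedron D"
    and "D \<inter> {x. d \<bullet> x > 0} \<noteq> {}"
  shows "(INF x \<in> D \<inter> {x. d \<bullet> x > 0}. ereal ((c \<bullet> x) / (d \<bullet> x))) = -\<infinity>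
     \<longleftrightarrow> ((\<exists>x\<in>D. c \<bullet> x < 0 \<and> d \<bullet> x = 0) \<or>
          (\<exists>r. c \<bullet> r < 0 \<and> d \<bullet> r = 0 \<and> (\<forall>x\<in>D. \<forall>t::real. t \<ge> 0 \<longrightarrow> x + t *\<^sub>R r \<in> D)))"
    (is "?lhs \<longleftrightarrow> ?point \<or> ?direction")
proof -
  obtain y where y: "y \<in> D" "d \<bullet> y > 0"
    using assms(2) by blast
  have "?lhs \<longleftrightarrow> (\<forall>B. \<exists>x\<in>D. d \<bullet> x > 0 \<and> (c \<bullet> x) / (d \<bullet> x) < B)"
    by (auto simp: INF_ereal_eq_minf_iff)
  also have "\<dots> \<longleftrightarrow> ?point \<or> ?direction"
  proof
    assume unbounded: "\<forall>B. \<exists>x\<in>D. d \<bullet> x > 0 \<and> (c \<bullet> x) / (d \<bullet> x) < B"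
    show "?point \<or> ?direction"
    proof (rule ccontr)
      assume "\<not> (?point \<or> ?direction)"
      then obtain m where "\<And>x. x \<in> D \<Longrightarrow> d \<bullet> x > 0 \<Longrightarrow> m \<le> (c \<bullet> x) / (d \<bullet> x)"
        using polyhedron_ratio_bounded_below[OF assms(1)] by (metis not_less)
      with unbounded show False
        by (meson not_less)
    qed
  next
    assume "?point \<or> ?direction"
    then show "\<forall>B. \<exists>x\<in>D. d \<bullet> x > 0 \<and> (c \<bullet> x) / (d \<bullet> x) < B"
      by (elim disjE bexE exE conjE)
        (use ratio_unbounded_below_if_point[OF polyhedron_imp_convex[OF assms(1)] y]
          ratio_unbounded_below_if_direction[OF y] in blast)+
  qed
  finally show ?thesis .
qed

end
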